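(* Assume (a) and (b). Writing $P^\star=P^{(Q,\lambda)}_{\Theta|Z=z}$, the following hold: $$R_z(P^\star)+\lambda D_f(P^\star\|Q)=-\lambda\int f^*\Big(-\frac{L_z(\theta)+N_{Q,z}(\lambda)}{\lambda}\Big)dQ(\theta)-N_{Q,z}(\lambda),$$ and $$R_z(Q)+\lambda\int f\Big(\frac{dP^\star}{dQ}(\theta)\Big)\frac{dQ}{dP^\star}(\theta)\,dQ(\theta)=-\lambda\int f^*\Big(-\frac{L_z(\theta)+N_{Q,z}(\lambda)}{\lambda}\Big)\frac{dQ}{dP^\star}(\theta)\,dQ(\theta)-N_{Q,z}(\lambda).$$
   Context: Setting. - $\mathcal{M}\subseteq\mathbb{R}^d$; $h:\mathcal{M}\times\mathcal{X}\to\mathcal{Y}$; the loss $\ell:\mathcal{Y}\times\mathcal{Y}\to[0,\infty)$ satisfies $\ell(y,y)=0$. - For a dataset $z=((x_1,y_1),\dots,(x_n,y_n))$, $L_z(\theta)=\frac1n\sum_i\ell(h(\theta,x_i),y_i)$ and $R_z(P)=\int L_z\,dP$. - $Q$ is a Borel probability measure on $\mathcal{M}$, and $\triangle_Q(\mathcal{M})$ is the set of probability measures $P\ll Q$. Fix $\lambda>0$. - $f:[0,\infty)\to\mathbb{R}$ is convex with $f(1)=0$; $D_f(P\|Q)=\int f(\frac{dP}{dQ})dQ$. - $\dot f$ is the derivative of $f$ on $(0,\infty)$ and $\dot f^{-1}$ its inverse. - $f^*(t)=\sup_x(tx-f(x))$ is the Legendre–Fenchel transform. Assumptions. - (a) $f$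 is strictly convex and differentiable. - (b) There exists $\beta$ with $\dot f^{-1}\big(-\frac{\beta+L_z(\theta)}{\lambda}\big)>0$ on $\operatorname{supp}Q$ and $\int\dot f^{-1}\big(-\frac{\beta+L_z(\theta)}{\lambda}\big)dQ=1$. Normalization and solution. $N_{Q,z}(\lambda)$ denotes this $\beta$. $P^{(Q,\lambda)}_{\Theta|Z=z}$ is the unique minimizer of $R_z(P)+\lambda D_f(P\|Q)$ over $\triangle_Q(\mathcal{M})$, with density $\frac{dP^{(Q,\lambda)}_{\Theta|Z=z}}{dQ}(\theta)=\dot f^{-1}\big(-\frac{N_{Q,z}(\lambda)+L_z(\theta)}{\lambda}\big)$ on $\operatorname{supp}Q$; it is mutually absolutely continuous with $Q$. *)

theory Defs
  imports "HOL-Analysis.Analysis" "HOL-Probability.Probability"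
begin

definition Lz :: "('p \<Rightarrow> 'x \<Rightarrow> 'y) \<Rightarrow> ('y \<Rightarrow> 'y \<Rightarrow> real) \<Rightarrow> ('x \<times> 'y) list \<Rightarrow> 'p \<Rightarrow> real" where
  "Lz h l z \<theta> = (\<Sum>(x, y)\<leftarrow>z. l (h \<theta> x) y) / real (length z)"

definition Rz :: "('p \<Rightarrow> 'x \<Rightarrow> 'y) \<Rightarrow> ('y \<Rightarrow> 'y \<Rightarrow> real) \<Rightarrow> ('x \<times> 'y) list \<Rightarrow> 'p measure \<Rightarrow> real" where
  "Rz h l z P = (\<integral>\<theta>. Lz h l z \<theta> \<partial>P)"

definition fdiv :: "(real \<Rightarrow> real) \<Rightarrow> 'p measure \<Rightarrow> 'p measure \<Rightarrow> real" where
  "fdiv f P Q = (\<integral>\<theta>. f (enn2real (RN_deriv Q P \<theta>)) \<partial>Q)"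

definition strictly_convex_on :: "real set \<Rightarrow> (real \<Rightarrow> real) \<Rightarrow> bool" where
  "strictly_convex_on S f \<longleftrightarrow> (\<forall>x\<in>S. \<forall>y\<in>S. \<forall>u::real. x \<noteq> y \<and> 0 < u \<and> u < 1 \<longrightarrow>
      f (u * x + (1 - u) * y) < u * f x + (1 - u) * f y)"

definition fconj :: "(real \<Rightarrow> real) \<Rightarrow> real \<Rightarrow> real" where
  "fconj f t = (SUP x\<in>{0..}. t * x - f x)"

definition fdot_inv :: "(real \<Rightarrow> real) \<Rightarrow> real \<Rightarrow> real" where
  "fdot_inv f y = inv_into {0<..} (deriv f) y"

definition msupp :: "'p::topological_space measure \<Rightarrow> 'p set" where
  "msupp Q = {\<theta> \<in> space Q. \<forall>U. open U \<and> \<theta> \<in> U \<longrightarrow> emeasure Q (U \<inter> space Q) > 0}"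

text \<open>Density of the solution w.r.t. Q (given on supp Q; set to 0 on the Q-null complement).\<close>
definition gibbs_density :: "(real \<Rightarrow> real) \<Rightarrow> real \<Rightarrow> real \<Rightarrow> ('p \<Rightarrow> real) \<Rightarrow> 'p::topological_space measure \<Rightarrow> 'p \<Rightarrow> real" where
  "gibbs_density f lam \<beta> L Q \<theta> = (if \<theta> \<in> msupp Q then fdot_inv f (- (\<beta> + L \<theta>) / lam) else 0)"

end

theory Submission
  imports Defs
begin

text \<open>On the support of Q the density g = (f')^-1(t), with t = -(L + beta)/lam, satisfies
  f'(g) = t; by convexity the tangent of f at g lies below f, so the Fenchel-Young inequality
  t g <= f(g) + f*(t) is an equality there. By Lindeloef, Q-almost every point lies in the support,
  so integrating f*(t) = t g - f(g) against Q, resp. against Q with weight 1/g, and using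
  \<integral> g dQ = 1, resp. Q(M) = 1, yields both identities.\<close>

text \<open>Outside fconj_dom f the supremum defining fconj f is taken over an unbounded set, so it
  is a junk constant there; measurability is therefore shown piecewise.\<close>

definition fconj_dom :: "(real \<Rightarrow> real) \<Rightarrow> real set" where
  "fconj_dom f = {t. bdd_above ((\<lambda>x. t * x - f x) ` {0..})}"

lemma Sup_real_not_bdd_above_eq:
  fixes X Y :: "real set"
  assumes "\<not> bdd_above X" "\<not> bdd_above Y"
  shows "Sup X = Sup Y"
proof -
  have "(\<lambda>z. \<forall>x\<in>S. x \<le> z) = (\<lambda>z. False)" if "\<not> bdd_above S" for S :: "real set"
    using that unfolding bdd_above_def by (metis not_le)
  then have "(\<lambda>z. \<forall>x\<in>X. x \<le> z) = (\<lambda>z. \<forall>x\<in>Y. x \<le> z)"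
    using assms by simp
  then show ?thesis unfolding Sup_real_def by simp
qed

lemma fconj_dom_down_closed:
  assumes "s \<le> t" "t \<in> fconj_dom f"
  shows "s \<in> fconj_dom f"
proof -
  obtain b where b: "\<And>x. x \<ge> 0 \<Longrightarrow> t * x - f x \<le> b"
    using assms(2) unfolding fconj_dom_def bdd_above_def by auto
  have "s * x - f x \<le> b" if "x \<ge> 0" for x
    using b[OF that] mult_right_mono[OF assms(1) that] by linarith
  then show ?thesis unfolding fconj_dom_def bdd_above_def by auto
qed

lemma is_interval_fconj_dom: "is_interval (fconj_dom f)"
  unfolding is_interval_1 using fconj_dom_down_closed by blast

lemma mono_on_fconj: "mono_on (fconj_dom f) (fconj f)"
proof (rule mono_onI)
  fix s t assume "s \<in> fconj_dom f" "t \<in> fconj_dom f" "s \<le> t"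
  have "s * x - f x \<le> fconj f t" if "x \<ge> 0" for x
  proof -
    have "s * x - f x \<le> t * x - f x" using mult_right_mono[OF \<open>s \<le> t\<close> that] by linarith
    also have "\<dots> \<le> fconj f t"
      using \<open>t \<in> fconj_dom f\<close> that unfolding fconj_def fconj_dom_def by (intro cSUP_upper) auto
    finally show ?thesis .
  qed
  then show "fconj f s \<le> fconj f t" unfolding fconj_def by (intro cSUP_least) auto
qed

lemma fconj_eq_outside_fconj_dom:
  "s \<notin> fconj_dom f \<Longrightarrow> t \<notin> fconj_dom f \<Longrightarrow> fconj f s = fconj f t"
  unfolding fconj_def fconj_dom_def by (auto intro: Sup_real_not_bdd_above_eq)

lemma borel_measurable_fconj [measurable]: "fconj f \<in> borel_measurable borel"
proof (rule borel_measurable_piecewise_mono[of "{fconj_dom f, - fconj_dom f}"])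
  fix c assume c: "c \<in> {fconj_dom f, - fconj_dom f}"
  then show "c \<in> sets borel"
    using real_interval_borel_measurable[OF is_interval_fconj_dom] by auto
  show "mono_on c (fconj f)"
  proof (cases "c = fconj_dom f")
    case True
    then show ?thesis using mono_on_fconj by simp
  next
    case False
    then have "c = - fconj_dom f" using c by simp
    then show ?thesis
      by (intro mono_onI) (metis ComplD fconj_eq_outside_fconj_dom order_refl)
  qed
qed auto

lemma borel_measurable_convex_on_nonneg_comp:
  fixes f :: "real \<Rightarrow> real"
  assumes f: "convex_on {0..} f" and X: "X \<in> borel_measurable M"
    and nonneg: "\<And>x. x \<in> space M \<Longrightarrow> X x \<ge> 0"
  shows "(\<lambda>x. f (X x)) \<in> borel_measurable M"
proof -
  have "continuous_on {0<..} f"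
    by (rule convex_on_continuous) (auto intro: convex_on_subset[OF f])
  then have "(\<lambda>x. if x \<in> {0<..} then f x else f 0) \<in> borel_measurable borel"
    by (intro borel_measurable_continuous_on_if) auto
  from measurable_compose[OF X this] show ?thesis
    by (rule measurable_cong[THEN iffD1, rotated]) (use nonneg in force)
qed

lemma fconj_deriv:
  fixes f :: "real \<Rightarrow> real"
  assumes f: "convex_on {0..} f" and x: "x > 0" and diff: "f differentiable (at x)"
  shows "fconj f (deriv f x) = deriv f x * x - f x"
proof -
  have D: "(f has_field_derivative deriv f x) (at x within {0..})"
    using diff DERIV_deriv_iff_real_differentiable has_field_derivative_at_within by blast
  have tangent: "deriv f x * y - f y \<le> deriv f x * x - f x" if "y \<ge> 0" for y
    using convex_on_imp_above_tangent[OF f _ _ _ D, of y] x that by (simp add: algebra_simps)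
  show ?thesis
    unfolding fconj_def by (rule cSup_eq_maximum) (use x tangent in auto)
qed

lemma fdot_inv_fenchel:
  fixes f :: "real \<Rightarrow> real"
  assumes f: "convex_on {0..} f" and diff: "\<forall>x>0. f differentiable (at x)"
    and t: "t \<in> deriv f ` {0<..}"
  shows "fdot_inv f t > 0" "fconj f t = t * fdot_inv f t - f (fdot_inv f t)"
proof -
  show pos: "fdot_inv f t > 0"
    using inv_into_into[OF t] unfolding fdot_inv_def by simp
  have "deriv f (fdot_inv f t) = t"
    using f_inv_into_f[OF t] unfolding fdot_inv_def .
  then show "fconj f t = t * fdot_inv f t - f (fdot_inv f t)"
    using fconj_deriv[OF f pos] diff pos by simp
qed

lemma gibbs_density_at_msupp:
  fixes f :: "real \<Rightarrow> real"
  assumes f: "convex_on {0..} f" and diff: "\<forall>x>0. f differentiable (at x)"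
    and range: "- (\<beta> + L \<theta>) / lam \<in> deriv f ` {0<..}" and \<theta>: "\<theta> \<in> msupp Q"
  defines "t \<equiv> - (L \<theta> + \<beta>) / lam"
  shows "gibbs_density f lam \<beta> L Q \<theta> > 0"
    and "fconj f t = t * gibbs_density f lam \<beta> L Q \<theta> - f (gibbs_density f lam \<beta> L Q \<theta>)"
  using fdot_inv_fenchel[OF f diff range] \<theta> by (simp_all add: gibbs_density_def t_def add.commute)

lemma AE_msupp:
  fixes Q :: "'a::second_countable_topology measure"
  assumes Q_sets: "sets Q = sets (restrict_space borel M)"
  shows "AE \<theta> in Q. \<theta> \<in> msupp Q"
proof -
  define F where "F = {U. open U \<and> emeasure Q (U \<inter> space Q) = 0}"
  obtain F' where F': "F' \<subseteq> F" "countable F'" "\<Union>F' = \<Union>F"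
    using Lindelof[of F] unfolding F_def by auto
  have space_Q: "space Q = M"
    using sets_eq_imp_space_eq[OF Q_sets] by (simp add: space_restrict_space)
  have "AE \<theta> in Q. \<theta> \<notin> U" if "U \<in> F" for U
  proof (rule AE_I)
    show "U \<inter> space Q \<in> sets Q"
      using that unfolding F_def Q_sets sets_restrict_space space_Q by auto
  qed (use that in \<open>auto simp: F_def\<close>)
  then have "AE \<theta> in Q. \<forall>U\<in>F'. \<theta> \<notin> U"
    using F'(1,2) by (intro AE_ball_countable') auto
  with AE_space show ?thesis
    by eventually_elim (use F'(3) in \<open>auto simp: msupp_def F_def zero_less_iff_neq_zero\<close>)
qed

lemma AE_enn2real_RN_deriv_density:
  assumes "sigma_finite_measure Q" "g \<in> borel_measurable Q" "\<And>\<theta>. g \<theta> \<ge> 0"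
  shows "AE \<theta> in Q. enn2real (RN_deriv Q (density Q (\<lambda>\<theta>. ennreal (g \<theta>))) \<theta>) = g \<theta>"
proof -
  have "AE \<theta> in Q. ennreal (g \<theta>) = RN_deriv Q (density Q (\<lambda>\<theta>. ennreal (g \<theta>))) \<theta>"
    using assms(2) by (intro sigma_finite_measure.RN_deriv_unique[OF assms(1)]) auto
  then show ?thesis
    by eventually_elim (metis assms(3) enn2real_ennreal)
qed

lemma fdiv_density:
  fixes f :: "real \<Rightarrow> real"
  assumes Q: "sigma_finite_measure Q" and f: "convex_on {0..} f"
    and g: "g \<in> borel_measurable Q" "\<And>\<theta>. g \<theta> \<ge> 0"
  shows "integrable Q (\<lambda>\<theta>. f (enn2real (RN_deriv Q (density Q (\<lambda>\<theta>. ennreal (g \<theta>))) \<theta>)))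
           \<longleftrightarrow> integrable Q (\<lambda>\<theta>. f (g \<theta>))"
    and "fdiv f (density Q (\<lambda>\<theta>. ennreal (g \<theta>))) Q = (\<integral>\<theta>. f (g \<theta>) \<partial>Q)"
proof -
  let ?r = "\<lambda>\<theta>. enn2real (RN_deriv Q (density Q (\<lambda>\<theta>. ennreal (g \<theta>))) \<theta>)"
  have meas: "(\<lambda>\<theta>. f (?r \<theta>)) \<in> borel_measurable Q" "(\<lambda>\<theta>. f (g \<theta>)) \<in> borel_measurable Q"
    using g by (auto intro!: borel_measurable_convex_on_nonneg_comp[OF f])
  have AE_eq: "AE \<theta> in Q. f (?r \<theta>) = f (g \<theta>)"
    using AE_enn2real_RN_deriv_density[OF Q g] by eventually_elim simp
  show "integrable Q (\<lambda>\<theta>. f (?r \<theta>)) \<longleftrightarrow> integrable Q (\<lambda>\<theta>. f (g \<theta>))"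
    by (rule integrable_cong_AE[OF meas AE_eq])
  show "fdiv f (density Q (\<lambda>\<theta>. ennreal (g \<theta>))) Q = (\<integral>\<theta>. f (g \<theta>) \<partial>Q)"
    unfolding fdiv_def by (rule integral_cong_AE[OF meas AE_eq])
qed

lemma Rz_density:
  assumes L: "Lz h l z \<in> borel_measurable Q"
    and g: "g \<in> borel_measurable Q" "\<And>\<theta>. g \<theta> \<ge> 0"
  shows "integrable (density Q (\<lambda>\<theta>. ennreal (g \<theta>))) (Lz h l z)
           \<longleftrightarrow> integrable Q (\<lambda>\<theta>. g \<theta> * Lz h l z \<theta>)"
    and "Rz h l z (density Q (\<lambda>\<theta>. ennreal (g \<theta>))) = (\<integral>\<theta>. g \<theta> * Lz h l z \<theta> \<partial>Q)"
  using integrable_density[OF L g(1)] integral_density[OF L g(1)] g(2) by (simp_all add: Rz_def)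

lemma integral_gibbs_objective:
  fixes Q :: "'a measure" and L g :: "'a \<Rightarrow> real" and f :: "real \<Rightarrow> real"
  assumes lam: "lam > 0" and L[measurable]: "L \<in> borel_measurable Q"
    and g_norm: "(\<integral>\<theta>. g \<theta> \<partial>Q) = 1"
    and fenchel: "AE \<theta> in Q. fconj f (- (L \<theta> + \<beta>) / lam) = - (L \<theta> + \<beta>) / lam * g \<theta> - f (g \<theta>)"
    and int_gL: "integrable Q (\<lambda>\<theta>. g \<theta> * L \<theta>)" and int_fg: "integrable Q (\<lambda>\<theta>. f (g \<theta>))"
  shows "(\<integral>\<theta>. g \<theta> * L \<theta> \<partial>Q) + lam * (\<integral>\<theta>. f (g \<theta>) \<partial>Q)
           = - lam * (\<integral>\<theta>. fconj f (- (L \<theta> + \<beta>) / lam) \<partial>Q) - \<beta>"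
proof -
  have int_g: "integrable Q g"
    using g_norm not_integrable_integral_eq by force
  have "(\<integral>\<theta>. fconj f (- (L \<theta> + \<beta>) / lam) \<partial>Q)
      = (\<integral>\<theta>. - (1 / lam) * (g \<theta> * L \<theta>) - (\<beta> / lam) * g \<theta> - f (g \<theta>) \<partial>Q)"
  proof (rule integral_cong_AE)
    show "AE \<theta> in Q. fconj f (- (L \<theta> + \<beta>) / lam)
        = - (1 / lam) * (g \<theta> * L \<theta>) - (\<beta> / lam) * g \<theta> - f (g \<theta>)"
      using fenchel by eventually_elim (use lam in \<open>simp add: field_simps\<close>)
  qed (use int_g int_gL int_fg in auto)
  also have "\<dots> = - (1 / lam) * (\<integral>\<theta>. g \<theta> * L \<theta> \<partial>Q) - \<beta> / lam - (\<integral>\<theta>. f (g \<theta>) \<partial>Q)"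
    using int_g int_gL int_fg g_norm by simp
  finally show ?thesis
    using lam by (simp add: field_simps)
qed

lemma integral_gibbs_reverse_objective:
  fixes Q :: "'a measure" and L g :: "'a \<Rightarrow> real" and f :: "real \<Rightarrow> real"
  assumes Q: "prob_space Q" and lam: "lam > 0"
    and L[measurable]: "L \<in> borel_measurable Q" and g[measurable]: "g \<in> borel_measurable Q"
    and g_pos: "AE \<theta> in Q. g \<theta> > 0"
    and fenchel: "AE \<theta> in Q. fconj f (- (L \<theta> + \<beta>) / lam) = - (L \<theta> + \<beta>) / lam * g \<theta> - f (g \<theta>)"
    and int_L: "integrable Q L" and int_fg: "integrable Q (\<lambda>\<theta>. f (g \<theta>) * (1 / g \<theta>))"
  shows "(\<integral>\<theta>. L \<theta> \<partial>Q) + lam * (\<integral>\<theta>. f (g \<theta>) * (1 / g \<theta>) \<partial>Q)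
           = - lam * (\<integral>\<theta>. fconj f (- (L \<theta> + \<beta>) / lam) * (1 / g \<theta>) \<partial>Q) - \<beta>"
proof -
  interpret prob_space Q by (rule Q)
  have "(\<integral>\<theta>. fconj f (- (L \<theta> + \<beta>) / lam) * (1 / g \<theta>) \<partial>Q)
      = (\<integral>\<theta>. - (1 / lam) * L \<theta> - \<beta> / lam - f (g \<theta>) * (1 / g \<theta>) \<partial>Q)"
  proof (rule integral_cong_AE)
    show "AE \<theta> in Q. fconj f (- (L \<theta> + \<beta>) / lam) * (1 / g \<theta>)
        = - (1 / lam) * L \<theta> - \<beta> / lam - f (g \<theta>) * (1 / g \<theta>)"
      using g_pos fenchel by eventually_elim (use lam in \<open>simp add: field_simps\<close>)
  qed (use int_fg in auto)
  also have "\<dots> = - (1 / lam) * (\<integral>\<theta>. L \<theta> \<partial>Q) - \<beta> / lam - (\<integral>\<theta>. f (g \<theta>) * (1 / g \<theta>) \<partial>Q)"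
    using int_L int_fg by (simp add: prob_space)
  finally show ?thesis
    using lam by (simp add: field_simps)
qed

theorem theorem8:
  fixes M :: "'a::euclidean_space set" and Q :: "'a measure"
    and h :: "'a \<Rightarrow> 'x \<Rightarrow> 'y" and l :: "'y \<Rightarrow> 'y \<Rightarrow> real" and z :: "('x \<times> 'y) list"
    and f :: "real \<Rightarrow> real" and lam \<beta> :: real
  defines "g \<equiv> gibbs_density f lam \<beta> (Lz h l z) Q"
  defines "Pstar \<equiv> density Q (\<lambda>\<theta>. ennreal (g \<theta>))"
  assumes loss_nonneg: "\<forall>u v. l u v \<ge> 0"
    and loss_diag: "\<forall>y. l y y = 0"
    and Q_sets: "sets Q = sets (restrict_space borel M)"
    and Q_prob: "prob_space Q"
    and L_meas: "Lz h l z \<in> borel_measurable Q"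
    and lam_pos: "lam > 0"
    and f_convex: "convex_on {0..} f"
    and f_one: "f 1 = 0"
    and f_strict: "strictly_convex_on {0..} f"
    and f_diff: "\<forall>x>0. f differentiable (at x)"
    and b_range: "\<forall>\<theta>\<in>msupp Q. - (\<beta> + Lz h l z \<theta>) / lam \<in> deriv f ` {0<..}"
    and b_norm: "(\<integral>\<theta>. g \<theta> \<partial>Q) = 1"
  shows "((integrable Pstar (Lz h l z) \<and> integrable Q (\<lambda>\<theta>. f (enn2real (RN_deriv Q Pstar \<theta>)))) \<longrightarrow>
           Rz h l z Pstar + lam * fdiv f Pstar Q
             = - lam * (\<integral>\<theta>. fconj f (- (Lz h l z \<theta> + \<beta>) / lam) \<partial>Q) - \<beta>)
         \<and> ((integrable Q (Lz h l z) \<and> integrable Q (\<lambda>\<theta>. f (g \<theta>) * (1 / g \<theta>))) \<longrightarrow>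
           Rz h l z Q + lam * (\<integral>\<theta>. f (g \<theta>) * (1 / g \<theta>) \<partial>Q)
             = - lam * (\<integral>\<theta>. fconj f (- (Lz h l z \<theta> + \<beta>) / lam) * (1 / g \<theta>) \<partial>Q) - \<beta>)"
proof -
  let ?L = "Lz h l z"
  let ?t = "\<lambda>\<theta>. - (?L \<theta> + \<beta>) / lam"
  interpret Q: prob_space Q by (rule Q_prob)
  have "integrable Q g"
    using b_norm not_integrable_integral_eq by force
  then have g_meas: "g \<in> borel_measurable Q" by auto
  have g_pos: "g \<theta> > 0" and fenchel: "fconj f (?t \<theta>) = ?t \<theta> * g \<theta> - f (g \<theta>)"
    if "\<theta> \<in> msupp Q" for \<theta>
    using gibbs_density_at_msupp[where L = "Lz h l z", OF f_convex f_diff b_range[rule_format, OF that] that]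
    unfolding g_def by simp_all
  have g_nonneg: "g \<theta> \<ge> 0" for \<theta>
    using g_pos[of \<theta>] by (cases "\<theta> \<in> msupp Q") (auto simp: g_def gibbs_density_def)
  have AE_pos: "AE \<theta> in Q. g \<theta> > 0"
    using AE_msupp[OF Q_sets] by eventually_elim (rule g_pos)
  have AE_fenchel: "AE \<theta> in Q. fconj f (?t \<theta>) = ?t \<theta> * g \<theta> - f (g \<theta>)"
    using AE_msupp[OF Q_sets] by eventually_elim (rule fenchel)
  note Rz_Pstar = Rz_density[OF L_meas g_meas g_nonneg, folded Pstar_def]
  note fdiv_Pstar = fdiv_density[OF Q.sigma_finite_measure f_convex g_meas g_nonneg, folded Pstar_def]
  show ?thesis
  proof (intro conjI impI)
    assume "integrable Pstar ?L \<and> integrable Q (\<lambda>\<theta>. f (enn2real (RN_deriv Q Pstar \<theta>)))"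
    with integral_gibbs_objective[OF lam_pos L_meas b_norm AE_fenchel] Rz_Pstar fdiv_Pstar
    show "Rz h l z Pstar + lam * fdiv f Pstar Q = - lam * (\<integral>\<theta>. fconj f (?t \<theta>) \<partial>Q) - \<beta>"
      by simp
  next
    assume "integrable Q ?L \<and> integrable Q (\<lambda>\<theta>. f (g \<theta>) * (1 / g \<theta>))"
    with integral_gibbs_reverse_objective[OF Q_prob lam_pos L_meas g_meas AE_pos AE_fenchel]
    show "Rz h l z Q + lam * (\<integral>\<theta>. f (g \<theta>) * (1 / g \<theta>) \<partial>Q)
        = - lam * (\<integral>\<theta>. fconj f (?t \<theta>) * (1 / g \<theta>) \<partial>Q) - \<beta>"
      unfolding Rz_def by simp
  qed
qed

end
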